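(* Let $N\ge K\ge1$, $\mathbf{H}\in\mathbb{R}^{N\times K}$ full column rank, let $\mathbf{u}_1$ be a unit eigenvector of $\mathbf{H}\mathbf{H}^T$ for its largest eigenvalue $\rho_1^2$. Let $M_1\ge1$, $M=M_1$, and use only the measurement matrix $\boldsymbol{\Phi}_s=\frac{1}{\sqrt{M_1}}\mathbf{1}_{M_1,1}\otimes\mathbf{u}_1^T$; let $\bar z_s[n]=\frac{1}{M_1}\mathbf{1}_{1,M_1}\mathbf{z}_s[n]$. Assume the noise variance $\sigma_0^2$ is known and, for $\gamma>0$, consider the test deciding $\mathcal{H}_1$ when $$\mathcal{T}=\frac{\sum_{n=1}^{N_b}|\bar z_s[n]|^2}{\sigma_0^2/M_1^2}>\gamma.$$ Then $P_{FA}=\mathbb{Q}_{\chi^2(N_b)}(\gamma)$ and $P_D=\mathbb{Q}_{\chi^2(N_b)}\Big(\frac{\sigma_0^2}{\sigma_0^2+M_1\sigma_x^2\rho_1^2}\gamma\Big)$.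
   Context: Observations over $n=1,\ldots,N_b$: rows $\boldsymbol{\phi}_m^T$ of $\boldsymbol{\Phi}_s$ represent $M_1$ devices; under $\mathcal{H}_0$ device $m$ outputs $z_m[n]=\boldsymbol{\phi}_m^T\mathbf{w}_m[n]$, under $\mathcal{H}_1$ it outputs $z_m[n]=\boldsymbol{\phi}_m^T(\mathbf{H}\mathbf{x}[n]+\mathbf{w}_m[n])$, with $\mathbf{x}[n]\sim\mathcal{N}(\mathbf{0}_{K,1},\sigma_x^2\mathbf{I}_K)$, $\mathbf{w}_m[n]\sim\mathcal{N}(\mathbf{0}_{N,1},\sigma_0^2\mathbf{I}_N)$, $\sigma_0^2>0$, all mutually independent across $m,n$; $\mathbf{z}_s[n]=(z_1[n],\ldots,z_{M_1}[n])^T$. $\mathbf{1}_{P,Q}$ is the $P\times Q$ all-ones matrix and $\otimes$ the Kronecker product. $P_{FA}=\Pr(\mathcal{T}>\gamma\mid\mathcal{H}_0)$, $P_D=\Pr(\mathcal{T}>\gamma\mid\mathcal{H}_1)$; $\mathbb{Q}_{\chi^2(d)}(x)=\Pr(X>x)$ for $X$ chi-squared with $d$ degrees of freedom. *)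

theory Defs
  imports "HOL-Probability.Probability"
begin

definition chi2_density :: "nat \<Rightarrow> real \<Rightarrow> real" where
  "chi2_density d x =
     (if 0 < x then x powr (real d / 2 - 1) * exp (- x / 2) / (2 powr (real d / 2) * Gamma (real d / 2))
      else 0)"

definition Q_chi2 :: "nat \<Rightarrow> real \<Rightarrow> real" where
  "Q_chi2 d x = (\<integral>t\<in>{x<..}. chi2_density d t \<partial>lborel)"

definition is_largest_eigenvalue :: "real^'n^'n \<Rightarrow> real \<Rightarrow> bool" where
  "is_largest_eigenvalue A l \<longleftrightarrow>
     (\<exists>v. v \<noteq> 0 \<and> A *v v = l *\<^sub>R v) \<and>
     (\<forall>\<mu> v. v \<noteq> 0 \<and> A *v v = \<mu> *\<^sub>R v \<longrightarrow> \<mu> \<le> l)"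

end

theory Submission
  imports Defs
begin

text \<open>Averaging the $M_1$ identical device outputs of snapshot $n$ gives
  $\bar z_s[n] = M_1^{-1/2}\,(\mathbf{H}^T\mathbf{u}_1)^T\mathbf{x}[n] + M_1^{-3/2}\sum_m \mathbf{u}_1^T\mathbf{w}_m[n]$,
  a linear combination of independent centred Gaussians; it is therefore centred Gaussian with variance
  $(\sigma_0^2 + M_1\sigma_x^2\|\mathbf{H}^T\mathbf{u}_1\|^2)/M_1^2$, where
  $\|\mathbf{H}^T\mathbf{u}_1\|^2 = \mathbf{u}_1^T\mathbf{H}\mathbf{H}^T\mathbf{u}_1 = \rho_1^2$
  (and the signal term is absent under $\mathcal{H}_0$). The snapshots involve disjoint sets of the
  underlying variables, so they are independent, and the normalised sum of their squares is
  chi-squared with $N_b$ degrees of freedom; rescaling the threshold gives both formulas. The chi-squared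
  law itself is obtained by induction, convolving densities via the Beta integral.\<close>

lemma chi2_density_nonneg: "0 \<le> chi2_density d x"
proof -
  have "Gamma (real d / 2) \<ge> 0"
    by (cases "d = 0") (auto intro: less_imp_le Gamma_real_pos)
  then show ?thesis
    by (simp add: chi2_density_def)
qed

lemma borel_measurable_chi2_density[measurable]: "chi2_density d \<in> borel_measurable borel"
  unfolding chi2_density_def by measurable

lemma chi2_density_1_square:
  assumes x: "x > 0"
  shows "chi2_density 1 (x\<^sup>2) * (2 * x) = 2 * std_normal_density x"
proof -
  have "(x\<^sup>2) powr (real 1 / 2 - 1) = (x powr 2) powr (-1/2)"
    using x by (simp add: powr_realpow)
  also have "\<dots> = x powr (-1)"
    by (simp add: powr_powr)
  also have "\<dots> = 1 / x"
    using x by (simp add: powr_minus divide_inverse)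
  finally have p: "(x\<^sup>2) powr (real 1 / 2 - 1) = 1 / x" .
  have "(2::real) powr (real 1 / 2) * Gamma (real 1 / 2) = sqrt (2 * pi)"
    by (simp add: powr_half_sqrt Gamma_one_half_real real_sqrt_mult)
  then have "chi2_density 1 (x\<^sup>2) = 1 / x * exp (- x\<^sup>2 / 2) / sqrt (2 * pi)"
    using x p unfolding chi2_density_def by (simp only: if_True) simp
  then show ?thesis
    using x by (simp add: std_normal_density_def)
qed

lemma chi2_density_product_scaled:
  fixes x t :: real and d e :: nat
  assumes x: "x > 0"
  defines "a \<equiv> real d / 2" and "b \<equiv> real e / 2"
  defines "K \<equiv> x powr (a + b - 2) * exp (- x / 2) / (2 powr (a + b) * Gamma a * Gamma b)"
  shows "chi2_density d (x - x * t) * chi2_density e (x * t) =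
           K * (t powr (b - 1) * (1 - t) powr (a - 1)) * indicator {0..1} t"
proof (cases "0 < t \<and> t < 1")
  case True
  have da: "chi2_density d y = y powr (a - 1) * exp (- y / 2) / (2 powr a * Gamma a)"
    and db: "chi2_density e y = y powr (b - 1) * exp (- y / 2) / (2 powr b * Gamma b)"
    if "y > 0" for y
    using that by (simp_all add: chi2_density_def a_def b_def)
  have powr_left: "(x - x * t) powr (a - 1) = x powr (a - 1) * (1 - t) powr (a - 1)"
    using True x by (simp add: powr_mult[symmetric] algebra_simps)
  have powr_right: "(x * t) powr (b - 1) = x powr (b - 1) * t powr (b - 1)"
    using True x by (simp add: powr_mult)
  have powr_sum: "x powr (a - 1) * x powr (b - 1) = x powr (a + b - 2)"
    using x by (simp add: powr_add[symmetric])
  have exp_sum: "exp (- (x - x * t) / 2) * exp (- (x * t) / 2) = exp (- x / 2)"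
    by (simp add: exp_add[symmetric] field_simps)
  have two_powr_sum: "(2::real) powr a * 2 powr b = 2 powr (a + b)"
    by (simp add: powr_add)
  have "x - x * t > 0" "x * t > 0"
    using True x by (simp_all add: mult_less_cancel_left1)
  then show ?thesis
    using True unfolding K_def
    apply (simp add: da db powr_left powr_right)
    apply (simp add: powr_sum[symmetric] exp_sum[symmetric] two_powr_sum[symmetric] field_simps mult_exp_exp)
    done
next
  case False
  then have "x * t \<le> 0 \<or> x - x * t \<le> 0"
    using x by (auto simp: mult_le_0_iff)
  then have "chi2_density d (x - x * t) * chi2_density e (x * t) = 0"
    by (auto simp: chi2_density_def)
  moreover have "t powr (b - 1) * (1 - t) powr (a - 1) * indicator {0..1} t = 0"
    using False by (cases "t = 0 \<or> t = 1") (auto simp: indicator_def)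
  ultimately show ?thesis
    by (metis mult.assoc mult_zero_right)
qed

lemma nn_integral_Beta:
  assumes "a > 0" "b > 0"
  shows "(\<integral>\<^sup>+t. ennreal (t powr (a - 1) * (1 - t) powr (b - 1) * indicator {0..1} t) \<partial>lborel) = Beta a b"
proof -
  have "(\<integral>\<^sup>+t. ennreal (t powr (a - 1) * (1 - t) powr (b - 1) * indicator {0..1} t) \<partial>lborel)
      = (\<integral>\<^sup>+t. ennreal (t powr (a - 1) * (1 - t) powr (b - 1)) * indicator {0..1} t \<partial>lborel)"
    by (intro nn_integral_cong) (simp add: indicator_def)
  also have "\<dots> = Beta a b"
    by (rule nn_integral_has_integral_lebesgue'[OF _ has_integral_Beta_real]) (use assms in auto)
  finally show ?thesis .
qed

lemma chi2_density_convolution: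
  assumes d: "d > 0" and e: "e > 0"
  shows "(\<integral>\<^sup>+y. ennreal (chi2_density d (x - y)) * ennreal (chi2_density e y) \<partial>lborel) =
           chi2_density (d + e) x"
proof (cases "x > 0")
  case False
  then have "ennreal (chi2_density d (x - y)) * ennreal (chi2_density e y) = 0" for y
    by (auto simp: chi2_density_def)
  then have "(\<integral>\<^sup>+y. ennreal (chi2_density d (x - y)) * ennreal (chi2_density e y) \<partial>lborel) = 0"
    by (simp only: nn_integral_0_iff_AE) simp
  then show ?thesis
    using False by (simp add: chi2_density_def)
next
  case x: True
  define a b where "a = real d / 2" and "b = real e / 2"
  define K where "K = x powr (a + b - 2) * exp (- x / 2) / (2 powr (a + b) * Gamma a * Gamma b)"
  have ab: "a > 0" "b > 0"
    using d e by (simp_all add: a_def b_def)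
  then have K: "K \<ge> 0"
    unfolding K_def by (auto intro!: divide_nonneg_pos mult_pos_pos)
  have Beta: "Beta b a > 0"
    using ab by (simp add: Beta_def)
  have "(\<integral>\<^sup>+y. ennreal (chi2_density d (x - y)) * ennreal (chi2_density e y) \<partial>lborel)
      = ennreal \<bar>x\<bar> * (\<integral>\<^sup>+t. ennreal (chi2_density d (x - (0 + x * t))) * ennreal (chi2_density e (0 + x * t)) \<partial>lborel)"
    using x by (intro nn_integral_real_affine) auto
  also have "\<dots> = ennreal x * (\<integral>\<^sup>+t. ennreal K * ennreal (t powr (b - 1) * (1 - t) powr (a - 1) * indicator {0..1} t) \<partial>lborel)"
  proof -
    have "ennreal (chi2_density d (x - x * t)) * ennreal (chi2_density e (x * t)) =
            ennreal K * ennreal (t powr (b - 1) * (1 - t) powr (a - 1) * indicator {0..1} t)" for t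
      using chi2_density_product_scaled[OF x, where d = d and e = e and t = t, folded a_def b_def, folded K_def]
      by (simp add: chi2_density_nonneg K mult.assoc flip: ennreal_mult')
    then show ?thesis
      using x by simp
  qed
  also have "\<dots> = ennreal x * (ennreal K * (\<integral>\<^sup>+t. ennreal (t powr (b - 1) * (1 - t) powr (a - 1) * indicator {0..1} t) \<partial>lborel))"
    by (simp add: nn_integral_cmult)
  also have "\<dots> = ennreal (x * K * Beta b a)"
    unfolding nn_integral_Beta[OF ab(2,1)] using x K Beta by (simp add: ennreal_mult mult.assoc)
  also have "x * K * Beta b a = chi2_density (d + e) x"
  proof -
    have ab_sum: "real (d + e) / 2 = a + b"
      by (simp add: a_def b_def add_divide_distrib)
    have "chi2_density (d + e) x = x powr (a + b - 1) * exp (- x / 2) / (2 powr (a + b) * Gamma (a + b))"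
      using x unfolding chi2_density_def ab_sum by simp
    moreover have "x * x powr (a + b - 2) = x powr (a + b - 1)"
      using x powr_add[of x 1 "a + b - 2"] by simp
    moreover have "Gamma a > 0" "Gamma b > 0" "Gamma (a + b) > 0"
      using ab by simp_all
    ultimately show ?thesis
      unfolding K_def Beta_def by (simp add: field_simps)
  qed
  finally show ?thesis .
qed

lemma nn_integral_chi2_density_1_atMost:
  assumes r: "r \<ge> 0"
  shows "(\<integral>\<^sup>+x. ennreal (chi2_density 1 x) * indicator {..r\<^sup>2} x \<partial>lborel) =
           (\<integral>\<^sup>+x. ennreal (std_normal_density x) * indicator {-r..r} x \<partial>lborel)"
proof -
  have "(\<integral>\<^sup>+x. ennreal (chi2_density 1 x) * indicator {..r\<^sup>2} x \<partial>lborel) =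
          (\<integral>\<^sup>+x. ennreal (chi2_density 1 x * indicator {0\<^sup>2..r\<^sup>2} x) \<partial>lborel)"
    by (intro nn_integral_cong) (auto simp: chi2_density_def indicator_def)
  also have "\<dots> = (\<integral>\<^sup>+x. ennreal (chi2_density 1 (x\<^sup>2) * (2 * x) * indicator {0..r} x) \<partial>lborel)"
    by (rule nn_integral_substitution[where g = "\<lambda>x. x\<^sup>2" and g' = "\<lambda>x. 2 * x"])
       (auto intro!: derivative_eq_intros continuous_intros simp: r set_borel_measurable_def)
  also have "\<dots> = (\<integral>\<^sup>+x. ennreal (2 * std_normal_density x * indicator {0..r} x) \<partial>lborel)"
    using AE_lborel_singleton[of 0]
    by (intro nn_integral_cong_AE, eventually_elim) (auto simp: chi2_density_1_square[unfolded One_nat_def] indicator_def)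
  also have "\<dots> = 2 * (\<integral>\<^sup>+x. ennreal (std_normal_density x) * indicator {0..r} x \<partial>lborel)"
    by (subst nn_integral_cmult[symmetric]) (auto intro!: nn_integral_cong simp: ennreal_mult indicator_def)
  also have "\<dots> = (\<integral>\<^sup>+x. ennreal (std_normal_density x) * indicator {-r..0} x +
                    ennreal (std_normal_density x) * indicator {0..r} x \<partial>lborel)"
  proof -
    have "(\<integral>\<^sup>+x. ennreal (std_normal_density x) * indicator {-r..0} x \<partial>lborel) =
            (\<integral>\<^sup>+x. ennreal (std_normal_density x) * indicator {0..r} x \<partial>lborel)"
      by (subst nn_integral_real_affine[where c = "-1" and t = 0])
         (auto simp: std_normal_density_def indicator_def intro!: nn_integral_cong)
    then show ?thesis
      by (subst nn_integral_add) (auto simp: mult_2)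
  qed
  also have "\<dots> = (\<integral>\<^sup>+x. ennreal (std_normal_density x) * indicator {-r..r} x \<partial>lborel)"
    using AE_lborel_singleton[of 0]
    by (intro nn_integral_cong_AE, eventually_elim) (auto simp: indicator_def)
  finally show ?thesis .
qed

lemma (in prob_space) distributed_square_std_normal:
  assumes Z: "distributed M lborel Z std_normal_density"
  shows "distributed M lborel (\<lambda>\<omega>. (Z \<omega>)\<^sup>2) (chi2_density 1)"
proof (rule distributedI_borel_atMost[where g = "\<lambda>a. measure M {\<omega>\<in>space M. (Z \<omega>)\<^sup>2 \<le> a}"])
  have [measurable]: "Z \<in> borel_measurable M"
    using distributed_measurable[OF Z] by simp
  show "(\<lambda>\<omega>. (Z \<omega>)\<^sup>2) \<in> borel_measurable M"
    by measurable
  show "emeasure M {\<omega>\<in>space M. (Z \<omega>)\<^sup>2 \<le> a} = ennreal (measure M {\<omega>\<in>space M. (Z \<omega>)\<^sup>2 \<le> a})" for a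
    by (simp add: emeasure_eq_measure)
  show "(\<integral>\<^sup>+x. ennreal (chi2_density 1 x * indicator {..a} x) \<partial>lborel) =
          ennreal (measure M {\<omega>\<in>space M. (Z \<omega>)\<^sup>2 \<le> a})" for a
  proof (cases "a < 0")
    case True
    then have empty: "{\<omega>\<in>space M. (Z \<omega>)\<^sup>2 \<le> a} = {}"
      by (auto simp: not_le intro: less_le_trans[OF _ zero_le_power2])
    have "ennreal (chi2_density 1 x * indicator {..a} x) = 0" for x
      using True by (auto simp: chi2_density_def indicator_def)
    then show ?thesis
      unfolding empty by simp
  next
    case False
    define r where "r = sqrt a"
    have r: "r \<ge> 0" "r\<^sup>2 = a"
      using False by (auto simp: r_def)
    have "{\<omega>\<in>space M. (Z \<omega>)\<^sup>2 \<le> a} = Z -` {-r..r} \<inter> space M"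
      using r by (auto simp: abs_le_square_iff[symmetric] abs_le_iff)
    then have "emeasure M {\<omega>\<in>space M. (Z \<omega>)\<^sup>2 \<le> a} =
                 (\<integral>\<^sup>+x. ennreal (std_normal_density x) * indicator {-r..r} x \<partial>lborel)"
      by (simp add: distributed_emeasure[OF Z])
    also have "\<dots> = (\<integral>\<^sup>+x. ennreal (chi2_density 1 x * indicator {..a} x) \<partial>lborel)"
      using nn_integral_chi2_density_1_atMost[OF r(1)] r(2)
      by (auto simp: indicator_mult_ennreal mult.commute)
    finally show ?thesis
      by (simp add: emeasure_eq_measure)
  qed
qed (simp_all add: chi2_density_nonneg)

lemma (in prob_space) distributed_sum_squares_std_normal:
  assumes "finite I" "I \<noteq> {}"
    and "indep_vars (\<lambda>_. borel) Z I"
    and "\<And>i. i \<in> I \<Longrightarrow> distributed M lborel (Z i) std_normal_density"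
  shows "distributed M lborel (\<lambda>\<omega>. \<Sum>i\<in>I. (Z i \<omega>)\<^sup>2) (chi2_density (card I))"
  using assms
proof (induction I rule: finite_ne_induct)
  case (singleton i)
  then show ?case
    using distributed_square_std_normal[of "Z i"] by simp
next
  case (insert i I)
  have "indep_vars (\<lambda>_. borel) (\<lambda>j \<omega>. (Z j \<omega>)\<^sup>2) (insert i I)"
    by (rule indep_vars_compose2[OF insert.prems(1)]) simp
  then have "indep_var borel (\<lambda>\<omega>. (Z i \<omega>)\<^sup>2) borel (\<lambda>\<omega>. \<Sum>j\<in>I. (Z j \<omega>)\<^sup>2)"
    using indep_vars_sum[OF insert.hyps(1,3)] by blast
  moreover have "distributed M lborel (\<lambda>\<omega>. (Z i \<omega>)\<^sup>2) (chi2_density 1)"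
    using distributed_square_std_normal insert.prems(2) by simp
  moreover have "distributed M lborel (\<lambda>\<omega>. \<Sum>j\<in>I. (Z j \<omega>)\<^sup>2) (chi2_density (card I))"
    using insert.IH insert.prems indep_vars_subset[OF insert.prems(1)] by auto
  ultimately have "distributed M lborel (\<lambda>\<omega>. (Z i \<omega>)\<^sup>2 + (\<Sum>j\<in>I. (Z j \<omega>)\<^sup>2))
      (\<lambda>x. \<integral>\<^sup>+y. ennreal (chi2_density 1 (x - y)) * ennreal (chi2_density (card I) y) \<partial>lborel)"
    by (rule distributed_convolution)
  then show ?case
    using insert.hyps(1,2,3)
    by (simp add: chi2_density_convolution card_gt_0_iff plus_1_eq_Suc del: One_nat_def)
qed

lemma (in prob_space) prob_greater_chi2:
  assumes S: "distributed M lborel S (chi2_density d)"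
  shows "prob {\<omega>\<in>space M. S \<omega> > t} = Q_chi2 d t"
proof -
  have [measurable]: "S \<in> borel_measurable M"
    using distributed_measurable[OF S] by simp
  have "(\<integral>\<^sup>+x. ennreal (chi2_density d x) \<partial>lborel) = 1"
    using distributed_emeasure[OF S, of UNIV] by (simp add: emeasure_space_1)
  then have int: "integrable lborel (chi2_density d)"
    by (intro integrableI_nonneg) (auto simp: chi2_density_nonneg)
  have "emeasure M {\<omega>\<in>space M. S \<omega> > t} = (\<integral>\<^sup>+x. ennreal (chi2_density d x) * indicator {t<..} x \<partial>lborel)"
    using distributed_emeasure[OF S, of "{t<..}"] by (simp add: vimage_def Int_def conj_commute)
  also have "\<dots> = (\<integral>\<^sup>+x. ennreal (indicator {t<..} x *\<^sub>R chi2_density d x) \<partial>lborel)"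
    by (intro nn_integral_cong) (simp add: indicator_def)
  also have "\<dots> = ennreal (Q_chi2 d t)"
    unfolding Q_chi2_def set_lebesgue_integral_def
  proof (rule nn_integral_eq_integral)
    show "integrable lborel (\<lambda>x. indicator {t<..} x *\<^sub>R chi2_density d x)"
      by (rule integrable_mult_indicator) (simp_all add: int)
  qed (simp add: chi2_density_nonneg)
  finally have "emeasure M {\<omega>\<in>space M. S \<omega> > t} = ennreal (Q_chi2 d t)" .
  moreover have "Q_chi2 d t \<ge> 0"
    unfolding Q_chi2_def set_lebesgue_integral_def
    by (intro Bochner_Integration.integral_nonneg) (simp add: chi2_density_nonneg)
  ultimately show ?thesis
    by (simp add: emeasure_eq_measure)
qed

lemma (in prob_space) distributed_lincomb_indep_normal:
  assumes fin: "finite K" and ind: "indep_vars (\<lambda>_. borel) V K"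
    and normal: "\<And>j. j \<in> K \<Longrightarrow> distributed M lborel (V j) (normal_density 0 (\<sigma> j))"
    and \<sigma>: "\<And>j. j \<in> K \<Longrightarrow> \<sigma> j > 0"
    and var: "(\<Sum>j\<in>K. (a j * \<sigma> j)\<^sup>2) > 0"
  shows "distributed M lborel (\<lambda>\<omega>. \<Sum>j\<in>K. a j * V j \<omega>)
           (normal_density 0 (sqrt (\<Sum>j\<in>K. (a j * \<sigma> j)\<^sup>2)))"
proof -
  \<comment> \<open>Zero coefficients are dropped first: the library's sum rule needs positive deviations.\<close>
  define K' where "K' = {j\<in>K. a j \<noteq> 0}"
  have K': "K' \<subseteq> K" "finite K'"
    using fin by (auto simp: K'_def)
  have sum_K': "(\<Sum>j\<in>K. f j) = (\<Sum>j\<in>K'. f j)" if "\<And>j. a j = 0 \<Longrightarrow> f j = 0" for f :: "_ \<Rightarrow> real"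
    by (rule sum.mono_neutral_cong_right[OF fin K'(1)]) (auto simp: K'_def that)
  have "K' \<noteq> {}"
    using var sum_K'[of "\<lambda>j. (a j * \<sigma> j)\<^sup>2"] by auto
  moreover have "indep_vars (\<lambda>_. borel) (\<lambda>j \<omega>. a j * V j \<omega>) K'"
    by (rule indep_vars_compose2[OF indep_vars_subset[OF ind K'(1)]]) simp
  moreover have "distributed M lborel (\<lambda>\<omega>. a j * V j \<omega>) (normal_density 0 (\<bar>a j\<bar> * \<sigma> j))" if "j \<in> K'" for j
    using normal_density_affine[OF normal \<sigma>, of j "a j" 0] that by (auto simp: K'_def)
  ultimately have "distributed M lborel (\<lambda>\<omega>. \<Sum>j\<in>K'. a j * V j \<omega>)
      (normal_density (\<Sum>j\<in>K'. 0) (sqrt (\<Sum>j\<in>K'. (\<bar>a j\<bar> * \<sigma> j)\<^sup>2)))"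
    using \<sigma> K' by (intro sum_indep_normal) (auto simp: K'_def)
  moreover have "(\<lambda>\<omega>. \<Sum>j\<in>K. a j * V j \<omega>) = (\<lambda>\<omega>. \<Sum>j\<in>K'. a j * V j \<omega>)"
    by (intro ext sum_K') simp
  moreover have "(\<Sum>j\<in>K. (a j * \<sigma> j)\<^sup>2) = (\<Sum>j\<in>K'. (\<bar>a j\<bar> * \<sigma> j)\<^sup>2)"
    by (subst sum_K') (simp_all add: power_mult_distrib)
  ultimately show ?thesis
    by simp
qed

lemma (in prob_space) indep_vars_block_sums:
  fixes V :: "'j \<Rightarrow> 'a \<Rightarrow> real"
  assumes ind: "indep_vars (\<lambda>_. borel) V J"
    and K: "\<And>n. n \<in> I \<Longrightarrow> K n \<subseteq> J"
    and disj: "disjoint_family_on K I"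
  shows "indep_vars (\<lambda>_. borel) (\<lambda>n \<omega>. \<Sum>j\<in>K n. a j * V j \<omega>) I"
proof -
  have "indep_vars (\<lambda>n. PiM (K n) (\<lambda>_. borel)) (\<lambda>n \<omega>. restrict (\<lambda>j. V j \<omega>) (K n)) I"
    by (rule indep_vars_restrict[OF ind K disj])
  moreover have "(\<lambda>f. \<Sum>j\<in>K n. a j * f j) \<in> borel_measurable (PiM (K n) (\<lambda>_. borel))" for n
    by (rule borel_measurable_sum[where f = "\<lambda>j f. a j * f j"])
       (intro borel_measurable_times borel_measurable_const measurable_component_singleton)
  ultimately have "indep_vars (\<lambda>_. borel) (\<lambda>n \<omega>. \<Sum>j\<in>K n. a j * restrict (\<lambda>j. V j \<omega>) (K n) j) I"
    by (rule indep_vars_compose2)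
  then show ?thesis
    by simp
qed

lemma (in prob_space) prob_sum_squares_gaussian_blocks_greater:
  assumes ind: "indep_vars (\<lambda>_. borel) V J"
    and I: "finite I" "I \<noteq> {}"
    and K: "\<And>n. n \<in> I \<Longrightarrow> K n \<subseteq> J" "\<And>n. n \<in> I \<Longrightarrow> finite (K n)"
    and disj: "disjoint_family_on K I"
    and normal: "\<And>j. j \<in> J \<Longrightarrow> distributed M lborel (V j) (normal_density 0 (\<sigma> j))"
    and \<sigma>: "\<And>j. j \<in> J \<Longrightarrow> \<sigma> j > 0"
    and var: "\<And>n. n \<in> I \<Longrightarrow> (\<Sum>j\<in>K n. (a j * \<sigma> j)\<^sup>2) = s\<^sup>2"
    and s: "s > 0"
  shows "prob {\<omega>\<in>space M. (\<Sum>n\<in>I. (\<Sum>j\<in>K n. a j * V j \<omega>)\<^sup>2) > t} = Q_chi2 (card I) (t / s\<^sup>2)"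
proof -
  define Z where "Z n \<omega> = (\<Sum>j\<in>K n. a j * V j \<omega>) / s" for n \<omega>
  have "distributed M lborel (Z n) std_normal_density" if n: "n \<in> I" for n
  proof -
    have "distributed M lborel (\<lambda>\<omega>. \<Sum>j\<in>K n. a j * V j \<omega>) (normal_density 0 s)"
      using distributed_lincomb_indep_normal[OF K(2)[OF n] indep_vars_subset[OF ind K(1)[OF n]], of \<sigma> a]
        normal \<sigma> K(1)[OF n] var[OF n] s by auto
    then show ?thesis
      using normal_standard_normal_convert[OF s, of _ 0] by (simp add: Z_def[abs_def])
  qed
  moreover have "indep_vars (\<lambda>_. borel) Z I"
    using indep_vars_compose2[OF indep_vars_block_sums[OF ind K(1) disj, of a], of "\<lambda>_ x. x / s"]
    by (simp add: Z_def[abs_def])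
  ultimately have "distributed M lborel (\<lambda>\<omega>. \<Sum>n\<in>I. (Z n \<omega>)\<^sup>2) (chi2_density (card I))"
    by (intro distributed_sum_squares_std_normal I)
  then have "prob {\<omega>\<in>space M. (\<Sum>n\<in>I. (Z n \<omega>)\<^sup>2) > t / s\<^sup>2} = Q_chi2 (card I) (t / s\<^sup>2)"
    by (rule prob_greater_chi2)
  moreover have "(\<Sum>n\<in>I. (\<Sum>j\<in>K n. a j * V j \<omega>)\<^sup>2) = s\<^sup>2 * (\<Sum>n\<in>I. (Z n \<omega>)\<^sup>2)" for \<omega>
    using s by (simp add: Z_def sum_distrib_left power_divide)
  ultimately show ?thesis
    using s by (simp add: pos_divide_less_eq mult.commute)
qed

definition snapshot_entries :: "nat \<Rightarrow> nat \<Rightarrow> ((nat \<times> 'k) + (nat \<times> nat \<times> 'n)) set" where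
  "snapshot_entries M1 n = Inl ` ({n} \<times> UNIV) \<union> Inr ` ({1..M1} \<times> {n} \<times> UNIV)"

definition mean_coeff :: "nat \<Rightarrow> real^'n \<Rightarrow> real^'k \<Rightarrow> (nat \<times> 'k) + (nat \<times> nat \<times> 'n) \<Rightarrow> real" where
  "mean_coeff M1 u b j =
     (case j of Inl (n, k) \<Rightarrow> b $ k / sqrt (real M1) | Inr (m, n, i) \<Rightarrow> u $ i / (real M1 * sqrt (real M1)))"

lemma sum_snapshot_entries:
  fixes g :: "(nat \<times> 'k::finite) + (nat \<times> nat \<times> 'n::finite) \<Rightarrow> real"
  shows "(\<Sum>j\<in>snapshot_entries M1 n. g j) =
           (\<Sum>k\<in>UNIV. g (Inl (n, k))) + (\<Sum>m\<in>{1..M1}. \<Sum>i\<in>UNIV. g (Inr (m, n, i)))"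
proof -
  have "(\<Sum>j\<in>snapshot_entries M1 n. g j) =
          (\<Sum>p\<in>{n} \<times> UNIV. g (Inl p)) + (\<Sum>p\<in>{1..M1} \<times> {n} \<times> UNIV. g (Inr p))"
    unfolding snapshot_entries_def
    by (subst sum.union_disjoint) (auto simp: sum.reindex)
  then show ?thesis
    by (simp add: sum.cartesian_product')
qed

lemma inner_mult_eq_transpose_inner:
  fixes G :: "real^'k^'n"
  shows "u \<bullet> (G *v x) = (transpose G *v u) \<bullet> x"
  by (simp add: dot_lmul_matrix)

lemma sample_mean_eq_snapshot_sum:
  fixes G :: "real^'k^'n" and u :: "real^'n"
  assumes M1: "M1 \<ge> 1"
  shows "(1 / real M1) * (\<Sum>m\<in>{1..M1}. ((1 / sqrt (real M1)) *\<^sub>R u) \<bullet> (G *v X n \<omega> + W m n \<omega>)) =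
           (\<Sum>j\<in>snapshot_entries M1 n. mean_coeff M1 u (transpose G *v u) j *
              (case j of Inl (n, k) \<Rightarrow> X n \<omega> $ k | Inr (m, n, i) \<Rightarrow> W m n \<omega> $ i))"
proof -
  define b where "b = transpose G *v u"
  have "(\<Sum>m\<in>{1..M1}. ((1 / sqrt (real M1)) *\<^sub>R u) \<bullet> (G *v X n \<omega> + W m n \<omega>)) =
          real M1 * (b \<bullet> X n \<omega> / sqrt (real M1)) + (\<Sum>m\<in>{1..M1}. u \<bullet> W m n \<omega> / sqrt (real M1))"
    unfolding inner_scaleR_left
    unfolding inner_add_right inner_mult_eq_transpose_inner b_def[symmetric]
    by (simp add: add_divide_distrib sum.distrib)
  then show ?thesis
    using M1 unfolding sum_snapshot_entries mean_coeff_def b_def[symmetric]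
    by (simp add: inner_vec_def sum_distrib_left sum_divide_distrib field_simps)
qed

lemma norm_vec_square: "(norm x)\<^sup>2 = (\<Sum>i\<in>UNIV. (x $ i)\<^sup>2)"
  for x :: "real^'n"
  unfolding power2_norm_eq_inner inner_vec_def by (simp add: power2_eq_square)

lemma snapshot_variance:
  fixes u :: "real^'n" and b :: "real^'k"
  assumes u: "norm u = 1" and M1: "M1 \<ge> 1"
  shows "(\<Sum>j\<in>snapshot_entries M1 n. (mean_coeff M1 u b j * (case j of Inl _ \<Rightarrow> sx | Inr _ \<Rightarrow> sw))\<^sup>2) =
           (sw\<^sup>2 + real M1 * sx\<^sup>2 * (norm b)\<^sup>2) / (real M1)\<^sup>2"
proof -
  have "(\<Sum>k\<in>UNIV. (b $ k / sqrt (real M1) * sx)\<^sup>2) = sx\<^sup>2 * (norm b)\<^sup>2 / real M1"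
    by (simp add: norm_vec_square power_mult_distrib power_divide sum_distrib_left sum_divide_distrib mult.commute)
  moreover have "(\<Sum>m\<in>{1..M1}. \<Sum>i\<in>UNIV. (u $ i / (real M1 * sqrt (real M1)) * sw)\<^sup>2) = sw\<^sup>2 / (real M1)\<^sup>2"
  proof -
    have "(real M1 * sqrt (real M1))\<^sup>2 = real M1 ^ 3"
      by (simp add: power_mult_distrib power3_eq_cube power2_eq_square)
    then have "(\<Sum>i\<in>UNIV. (u $ i / (real M1 * sqrt (real M1)) * sw)\<^sup>2) = sw\<^sup>2 * (norm u)\<^sup>2 / (real M1 ^ 3)"
      by (simp add: norm_vec_square power_mult_distrib power_divide sum_distrib_left sum_divide_distrib mult.commute)
    then show ?thesis
      using u M1 by (simp add: power2_eq_square power3_eq_cube)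
  qed
  ultimately show ?thesis
    using M1 unfolding sum_snapshot_entries mean_coeff_def
    by (simp add: field_simps power2_eq_square)
qed

lemma norm_transpose_mult_eigenvector:
  fixes A :: "real^'k^'n"
  assumes "(A ** transpose A) *v u = c *\<^sub>R u" and "norm u = 1"
  shows "(norm (transpose A *v u))\<^sup>2 = c"
proof -
  have "(norm (transpose A *v u))\<^sup>2 = u \<bullet> (A *v (transpose A *v u))"
    by (simp add: dot_square_norm[symmetric] inner_mult_eq_transpose_inner)
  also have "\<dots> = u \<bullet> (c *\<^sub>R u)"
    by (simp only: matrix_vector_mul_assoc assms(1))
  finally show ?thesis
    using assms(2) by (simp add: dot_square_norm)
qed

lemma (in prob_space) prob_energy_detector_greater:
  fixes G :: "real^'k^'n" and u :: "real^'n"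
    and X :: "nat \<Rightarrow> 'a \<Rightarrow> real^'k" and W :: "nat \<Rightarrow> nat \<Rightarrow> 'a \<Rightarrow> real^'n"
  assumes u: "norm u = 1" and M1: "M1 \<ge> 1" and Nb: "Nb \<ge> 1" and sx: "sx > 0" and s0: "s0 > 0"
    and X: "\<And>n k. n \<in> {1..Nb} \<Longrightarrow> distributed M lborel (\<lambda>\<omega>. X n \<omega> $ k) (normal_density 0 sx)"
    and W: "\<And>m n i. m \<in> {1..M1} \<Longrightarrow> n \<in> {1..Nb} \<Longrightarrow>
              distributed M lborel (\<lambda>\<omega>. W m n \<omega> $ i) (normal_density 0 s0)"
    and ind: "indep_vars (\<lambda>_. borel)
               (\<lambda>j \<omega>. case j of Inl (n, k) \<Rightarrow> X n \<omega> $ k | Inr (m, n, i) \<Rightarrow> W m n \<omega> $ i)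
               ({(n, k). n \<in> {1..Nb}} <+> {(m, n, i). m \<in> {1..M1} \<and> n \<in> {1..Nb}})"
  shows "prob {\<omega>\<in>space M.
            (\<Sum>n\<in>{1..Nb}. ((1 / real M1) *
               (\<Sum>m\<in>{1..M1}. ((1 / sqrt (real M1)) *\<^sub>R u) \<bullet> (G *v X n \<omega> + W m n \<omega>)))\<^sup>2)
              / (s0\<^sup>2 / (real M1)\<^sup>2) > \<gamma>} =
         Q_chi2 Nb (s0\<^sup>2 / (s0\<^sup>2 + real M1 * sx\<^sup>2 * (norm (transpose G *v u))\<^sup>2) * \<gamma>)"
proof -
  define V where "V = (\<lambda>j \<omega>. case j of Inl (n, k) \<Rightarrow> X n \<omega> $ k | Inr (m, n, i) \<Rightarrow> W m n \<omega> $ i)"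
  define J :: "((nat \<times> 'k) + (nat \<times> nat \<times> 'n)) set"
    where "J = {(n, k). n \<in> {1..Nb}} <+> {(m, n, i). m \<in> {1..M1} \<and> n \<in> {1..Nb}}"
  define \<sigma> where "\<sigma> j = (case j of Inl _ \<Rightarrow> sx | Inr _ \<Rightarrow> s0)" for j :: "(nat \<times> 'k) + (nat \<times> nat \<times> 'n)"
  define v where "v = s0\<^sup>2 + real M1 * sx\<^sup>2 * (norm (transpose G *v u))\<^sup>2"
  have v: "v > 0"
    using s0 by (simp add: v_def add_pos_nonneg)
  have normal: "distributed M lborel (V j) (normal_density 0 (\<sigma> j))" if "j \<in> J" for j
    using that X W by (auto simp: J_def V_def \<sigma>_def)
  have "prob {\<omega>\<in>space M. (\<Sum>n\<in>{1..Nb}. (\<Sum>j\<in>snapshot_entries M1 n. mean_coeff M1 u (transpose G *v u) j * V j \<omega>)\<^sup>2)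
          > \<gamma> * (s0\<^sup>2 / (real M1)\<^sup>2)} =
        Q_chi2 (card {1..Nb}) (\<gamma> * (s0\<^sup>2 / (real M1)\<^sup>2) / (sqrt v / real M1)\<^sup>2)"
  proof (rule prob_sum_squares_gaussian_blocks_greater[where J = J and \<sigma> = \<sigma>])
    show "indep_vars (\<lambda>_. borel) V J"
      using ind by (simp add: V_def J_def)
    show "disjoint_family_on (snapshot_entries M1) {1..Nb}"
      by (auto simp: disjoint_family_on_def snapshot_entries_def)
    show "(\<Sum>j\<in>snapshot_entries M1 n. (mean_coeff M1 u (transpose G *v u) j * \<sigma> j)\<^sup>2) = (sqrt v / real M1)\<^sup>2" for n
      using snapshot_variance[OF u M1, where n = n and b = "transpose G *v u" and sx = sx and sw = s0] v
      by (simp add: \<sigma>_def v_def power_divide)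
  qed (use normal Nb M1 v sx s0 in \<open>auto simp: J_def snapshot_entries_def \<sigma>_def split: sum.split\<close>)
  moreover have "\<gamma> * (s0\<^sup>2 / (real M1)\<^sup>2) / (sqrt v / real M1)\<^sup>2 = s0\<^sup>2 / v * \<gamma>"
    using M1 v by (simp add: power_divide)
  moreover have "(\<Sum>n\<in>{1..Nb}. ((1 / real M1) *
               (\<Sum>m\<in>{1..M1}. ((1 / sqrt (real M1)) *\<^sub>R u) \<bullet> (G *v X n \<omega> + W m n \<omega>)))\<^sup>2)
              / (s0\<^sup>2 / (real M1)\<^sup>2) > \<gamma> \<longleftrightarrow>
        (\<Sum>n\<in>{1..Nb}. (\<Sum>j\<in>snapshot_entries M1 n. mean_coeff M1 u (transpose G *v u) j * V j \<omega>)\<^sup>2)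
          > \<gamma> * (s0\<^sup>2 / (real M1)\<^sup>2)" for \<omega>
    unfolding sample_mean_eq_snapshot_sum[OF M1] V_def
    by (rule pos_less_divide_eq) (use s0 M1 in simp)
  ultimately show ?thesis
    using Nb by (simp add: v_def)
qed

text \<open>Full column rank of $\mathbf{H}$ and maximality of $\rho_1^2$ only motivate the choice of
  $\mathbf{u}_1$; the proof needs just the eigen-equation.\<close>

theorem proposition2:
  fixes P :: "'a measure"
    and H :: "real^'k^'n" and u1 :: "real^'n" and rho1 :: real
    and M1 Nb :: nat and sx s0 \<gamma> :: real
    and X :: "nat \<Rightarrow> 'a \<Rightarrow> real^'k"
    and W :: "nat \<Rightarrow> nat \<Rightarrow> 'a \<Rightarrow> real^'n"
  assumes "prob_space P"
    and "CARD('k) \<le> CARD('n)"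
    and "rank H = CARD('k)"
    and "is_largest_eigenvalue (H ** transpose H) (rho1\<^sup>2)"
    and "norm u1 = 1" and "(H ** transpose H) *v u1 = rho1\<^sup>2 *\<^sub>R u1"
    and "M1 \<ge> 1" and "Nb \<ge> 1"
    and "sx > 0" and "s0 > 0" and "\<gamma> > 0"
    and "\<And>n k. n \<in> {1..Nb} \<Longrightarrow>
           distributed P lborel (\<lambda>\<omega>. X n \<omega> $ k) (normal_density 0 sx)"
    and "\<And>m n i. m \<in> {1..M1} \<Longrightarrow> n \<in> {1..Nb} \<Longrightarrow>
           distributed P lborel (\<lambda>\<omega>. W m n \<omega> $ i) (normal_density 0 s0)"
    and "prob_space.indep_vars P (\<lambda>_. borel)
           (\<lambda>j \<omega>. case j of Inl (n, k) \<Rightarrow> X n \<omega> $ k | Inr (m, n, i) \<Rightarrow> W m n \<omega> $ i)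
           ({(n, k). n \<in> {1..Nb}} <+> {(m, n, i). m \<in> {1..M1} \<and> n \<in> {1..Nb}})"
  shows
    "let phi = (\<lambda>m::nat. (1 / sqrt (real M1)) *\<^sub>R u1);
         z0 = (\<lambda>m n \<omega>. phi m \<bullet> W m n \<omega>);
         z1 = (\<lambda>m n \<omega>. phi m \<bullet> (H *v X n \<omega> + W m n \<omega>));
         zbar = (\<lambda>z n \<omega>. (1 / real M1) * (\<Sum>m\<in>{1..M1}. z m n \<omega>));
         T = (\<lambda>z \<omega>. (\<Sum>n\<in>{1..Nb}. \<bar>zbar z n \<omega>\<bar>\<^sup>2) / (s0\<^sup>2 / (real M1)\<^sup>2))
     in prob_space.prob P {\<omega>\<in>space P. T z0 \<omega> > \<gamma>} = Q_chi2 Nb \<gamma> \<and>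
        prob_space.prob P {\<omega>\<in>space P. T z1 \<omega> > \<gamma>} =
          Q_chi2 Nb (s0\<^sup>2 / (s0\<^sup>2 + real M1 * sx\<^sup>2 * rho1\<^sup>2) * \<gamma>)"
proof -
  interpret prob_space P by fact
  show ?thesis
    unfolding Let_def power2_abs
    using prob_energy_detector_greater[OF assms(5,7-10,12-14), where G = 0 and \<gamma> = \<gamma>]
      prob_energy_detector_greater[OF assms(5,7-10,12-14), where G = H and \<gamma> = \<gamma>]
      norm_transpose_mult_eigenvector[OF assms(6,5)] assms(10)
    by simp
qed

end
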